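(* Let $G$ be a finite connected unweighted graph with graph distance $d$, and fix a vertex $r$. For vertices $a,b$ write $(a.b)_r=\tfrac12\big(d(a,r)+d(b,r)-d(a,b)\big)$, and for vertices $x\neq y$ define $$f(x,y)=\max_{x=w_1,w_2,\dots,w_k=y}\ \min_{1\le i\le k-1}(w_i.w_{i+1})_r,$$ the maximum taken over all finite sequences of vertices (of arbitrary length $k\ge 2$) starting at $x$ and ending at $y$. Then for every pair of distinct vertices $x,y$ there exists a sequence $x=w_1,\dots,w_k=y$ attaining the maximum in $f(x,y)$ which is a path in $G$ (i.e. $w_iw_{i+1}\in E(G)$ for all $i$). Moreover, for such a maximizing path, letting $\alpha=\min_i d(w_i,r)$, we have $f(x,y)=\alpha-\tfrac12$ if there exists an $i$ with $d(w_i,r)=d(w_{i+1},r)=\alpha$, and $f(x,y)=\alpha$ otherwise.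
   Context: $(a.b)_r$ is the Gromov product with root $r$. A sequence attains the maximum in $f(x,y)$ if its value $\min_i (w_i.w_{i+1})_r$ equals $f(x,y)$. *)

theory Defs
  imports Main Complex_Main
begin

definition is_walk :: "'a set \<Rightarrow> ('a \<Rightarrow> 'a \<Rightarrow> bool) \<Rightarrow> 'a list \<Rightarrow> bool" where
  "is_walk V E ws \<longleftrightarrow> ws \<noteq> [] \<and> set ws \<subseteq> V \<and>
     (\<forall>i < length ws - 1. E (ws ! i) (ws ! Suc i))"

definition fin_conn_graph :: "'a set \<Rightarrow> ('a \<Rightarrow> 'a \<Rightarrow> bool) \<Rightarrow> bool" where
  "fin_conn_graph V E \<longleftrightarrow> finite V \<and>
     (\<forall>u v. E u v \<longrightarrow> u \<in> V \<and> v \<in> V) \<and>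
     (\<forall>u v. E u v \<longrightarrow> E v u) \<and>
     (\<forall>u. \<not> E u u) \<and>
     (\<forall>a\<in>V. \<forall>b\<in>V. \<exists>ws. is_walk V E ws \<and> hd ws = a \<and> last ws = b)"

definition gdist :: "'a set \<Rightarrow> ('a \<Rightarrow> 'a \<Rightarrow> bool) \<Rightarrow> 'a \<Rightarrow> 'a \<Rightarrow> nat" where
  "gdist V E a b = (LEAST n. \<exists>ws. is_walk V E ws \<and> hd ws = a \<and> last ws = b \<and> length ws = n + 1)"

definition gromov :: "'a set \<Rightarrow> ('a \<Rightarrow> 'a \<Rightarrow> bool) \<Rightarrow> 'a \<Rightarrow> 'a \<Rightarrow> 'a \<Rightarrow> real" where
  "gromov V E r a b = (real (gdist V E a r) + real (gdist V E b r) - real (gdist V E a b)) / 2"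

definition vseq :: "'a set \<Rightarrow> 'a \<Rightarrow> 'a \<Rightarrow> 'a list \<Rightarrow> bool" where
  "vseq V x y ws \<longleftrightarrow> length ws \<ge> 2 \<and> set ws \<subseteq> V \<and> hd ws = x \<and> last ws = y"

definition seqval :: "'a set \<Rightarrow> ('a \<Rightarrow> 'a \<Rightarrow> bool) \<Rightarrow> 'a \<Rightarrow> 'a list \<Rightarrow> real" where
  "seqval V E r ws = Min {gromov V E r (ws ! i) (ws ! Suc i) | i. i < length ws - 1}"

definition fmax :: "'a set \<Rightarrow> ('a \<Rightarrow> 'a \<Rightarrow> bool) \<Rightarrow> 'a \<Rightarrow> 'a \<Rightarrow> 'a \<Rightarrow> real" where
  "fmax V E r x y = Max {seqval V E r ws | ws. vseq V x y ws}"

end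

theory Submission
  imports Defs
begin

text \<open>Along a geodesic from a to b, each edge u v satisfies (u.v)_r \<ge> (a.b)_r, by the triangle
inequality through r. Replacing every step of an optimal sequence by a geodesic therefore yields an
optimal sequence that is a walk. On a walk consecutive distances to r differ by at most one and
(u.v)_r = (d(u,r) + d(v,r) - 1)/2 for every edge, which pins the minimum down to \<alpha> - 1/2 or \<alpha>.\<close>

lemma is_walk_iff_successively:
  "is_walk V E ws \<longleftrightarrow> ws \<noteq> [] \<and> set ws \<subseteq> V \<and> successively E ws"
  unfolding is_walk_def successively_conv_nth
  by (metis Suc_diff_1 Suc_less_eq bot_nat_0.not_eq_extremum less_diff_conv not_less_zero)

lemma is_walk_edge: "is_walk V E ws \<Longrightarrow> Suc i < length ws \<Longrightarrow> E (ws ! i) (ws ! Suc i)"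
  by (simp add: is_walk_iff_successively successively_nth)

lemma successively_glue:
  assumes "successively P xs" "successively P ys" "xs \<noteq> []" "last xs = hd ys"
  shows "successively P (xs @ tl ys)"
  using assms by (cases ys) (auto simp: successively_append_iff successively_Cons)

lemma is_walk_glue:
  assumes "is_walk V E xs" "is_walk V E ys" "last xs = hd ys"
  shows "is_walk V E (xs @ tl ys)" "hd (xs @ tl ys) = hd xs" "last (xs @ tl ys) = last ys"
proof -
  have ne: "xs \<noteq> []" "ys \<noteq> []" using assms by (auto simp: is_walk_def)
  then show "is_walk V E (xs @ tl ys)" using assms successively_glue[of E xs ys]
    by (auto simp: is_walk_iff_successively dest: list.set_sel(2))
  show "hd (xs @ tl ys) = hd xs" using ne by simp
  show "last (xs @ tl ys) = last ys" using ne assms(3) by (cases ys) auto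
qed

lemma is_walk_take_drop:
  assumes "is_walk V E ws" "0 < k" "k < length ws"
  shows "is_walk V E (take k ws)" "is_walk V E (drop k ws)"
proof -
  have "successively E (take k ws)" "successively E (drop k ws)"
    using assms(1) successively_append_iff[of E "take k ws" "drop k ws"]
    by (auto simp: is_walk_iff_successively)
  moreover have "set (take k ws) \<subseteq> V" "set (drop k ws) \<subseteq> V" using assms(1)
    by (auto simp: is_walk_def dest: in_set_takeD in_set_dropD)
  ultimately show "is_walk V E (take k ws)" "is_walk V E (drop k ws)"
    using assms by (auto simp: is_walk_iff_successively)
qed

lemma gdist_le_walk:
  assumes "is_walk V E ws" "hd ws = a" "last ws = b"
  shows "gdist V E a b \<le> length ws - 1"
proof -
  have "ws \<noteq> []" using assms by (simp add: is_walk_def)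
  then show ?thesis unfolding gdist_def by (intro Least_le) (use assms in auto)
qed

lemma successively_refine:
  assumes bridge: "\<And>a b. a \<in> V \<Longrightarrow> b \<in> V \<Longrightarrow> P a b \<Longrightarrow>
      \<exists>zs. zs \<noteq> [] \<and> set zs \<subseteq> V \<and> successively Q zs \<and> hd zs = a \<and> last zs = b"
  shows "ws \<noteq> [] \<Longrightarrow> set ws \<subseteq> V \<Longrightarrow> successively P ws \<Longrightarrow>
    \<exists>zs. zs \<noteq> [] \<and> set zs \<subseteq> V \<and> successively Q zs \<and> hd zs = hd ws \<and> last zs = last ws"
proof (induction ws)
  case Nil
  then show ?case by simp
next
  case (Cons a ws)
  show ?case
  proof (cases "ws = []")
    case True
    then show ?thesis using Cons.prems by (intro exI[of _ "[a]"]) auto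
  next
    case False
    obtain zs where zs: "zs \<noteq> []" "set zs \<subseteq> V" "successively Q zs" "hd zs = hd ws" "last zs = last ws"
      using Cons False by (auto simp: successively_Cons)
    obtain bs where bs: "bs \<noteq> []" "set bs \<subseteq> V" "successively Q bs" "hd bs = a" "last bs = hd ws"
      using bridge[of a "hd ws"] Cons.prems False by (force simp: successively_Cons)
    show ?thesis
    proof (intro exI[of _ "bs @ tl zs"] conjI)
      show "successively Q (bs @ tl zs)" using successively_glue bs zs by metis
      show "set (bs @ tl zs) \<subseteq> V" using bs zs by (auto dest: list.set_sel(2))
      show "last (bs @ tl zs) = last (a # ws)" using zs bs False by (cases zs) (auto split: if_splits)
    qed (use bs in auto)
  qed
qed

lemma seqval_le:
  "Suc i < length ws \<Longrightarrow> seqval V E r ws \<le> gromov V E r (ws ! i) (ws ! Suc i)"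
  unfolding seqval_def by (rule Min_le) auto

lemma seqval_attained:
  assumes "2 \<le> length ws"
  obtains i where "Suc i < length ws" "seqval V E r ws = gromov V E r (ws ! i) (ws ! Suc i)"
proof -
  let ?g = "\<lambda>i. gromov V E r (ws ! i) (ws ! Suc i)"
  have "{?g i | i. i < length ws - 1} = ?g ` {..<length ws - 1}" by auto
  moreover have "Min (?g ` {..<length ws - 1}) \<in> ?g ` {..<length ws - 1}"
    using assms by (intro Min_in) (auto simp: lessThan_empty_iff)
  ultimately obtain i where "i < length ws - 1" "seqval V E r ws = ?g i"
    unfolding seqval_def by auto
  then show ?thesis using that by (simp add: less_diff_conv)
qed

lemma seqval_ge_iff:
  assumes "2 \<le> length ws"
  shows "t \<le> seqval V E r ws \<longleftrightarrow> successively (\<lambda>a b. t \<le> gromov V E r a b) ws"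
proof
  assume "t \<le> seqval V E r ws"
  then show "successively (\<lambda>a b. t \<le> gromov V E r a b) ws"
    unfolding successively_conv_nth
    by (intro allI impI) (erule order_trans[OF _ seqval_le])
next
  assume chain: "successively (\<lambda>a b. t \<le> gromov V E r a b) ws"
  obtain i where i: "Suc i < length ws" "seqval V E r ws = gromov V E r (ws ! i) (ws ! Suc i)"
    using seqval_attained[OF assms] .
  from successively_nth[OF chain i(1)] i(2) show "t \<le> seqval V E r ws" by simp
qed

lemma fmax_attained_and_maximal:
  assumes "finite V" "x \<in> V" "y \<in> V"
  shows "\<exists>ws. vseq V x y ws \<and> seqval V E r ws = fmax V E r x y"
    "vseq V x y ws \<Longrightarrow> seqval V E r ws \<le> fmax V E r x y"
proof -
  let ?F = "{seqval V E r ws | ws. vseq V x y ws}"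
  have "?F \<subseteq> (\<lambda>(a, b). gromov V E r a b) ` (V \<times> V)"
  proof
    fix v assume "v \<in> ?F"
    then obtain ws where ws: "vseq V x y ws" "v = seqval V E r ws" by auto
    then have "2 \<le> length ws" by (simp add: vseq_def)
    then obtain i where "Suc i < length ws" "v = gromov V E r (ws ! i) (ws ! Suc i)"
      using seqval_attained ws(2) by metis
    moreover have "ws ! i \<in> V" "ws ! Suc i \<in> V" using ws calculation by (auto simp: vseq_def)
    ultimately show "v \<in> (\<lambda>(a, b). gromov V E r a b) ` (V \<times> V)" by force
  qed
  then have fin: "finite ?F" by (rule finite_subset) (use assms(1) in simp)
  have "vseq V x y [x, y]" using assms by (simp add: vseq_def)
  then have "?F \<noteq> {}" by blast
  then show "\<exists>ws. vseq V x y ws \<and> seqval V E r ws = fmax V E r x y"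
    using Max_in[OF fin] unfolding fmax_def by auto
  show "vseq V x y ws \<Longrightarrow> seqval V E r ws \<le> fmax V E r x y"
    unfolding fmax_def by (rule Max_ge[OF fin]) auto
qed

locale connected_graph =
  fixes V :: "'a set" and E :: "'a \<Rightarrow> 'a \<Rightarrow> bool"
  assumes graph: "fin_conn_graph V E"
begin

lemma finite_vertices: "finite V"
  using graph by (simp add: fin_conn_graph_def)

lemma edge_vertices: "E u v \<Longrightarrow> u \<in> V \<and> v \<in> V"
  using graph by (simp add: fin_conn_graph_def)

lemma edge_sym: "E u v \<Longrightarrow> E v u"
  using graph by (simp add: fin_conn_graph_def)

lemma edge_irrefl: "\<not> E u u"
  using graph by (simp add: fin_conn_graph_def)

lemma geodesic_exists:
  assumes "a \<in> V" "b \<in> V"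
  obtains ws where "is_walk V E ws" "hd ws = a" "last ws = b" "length ws = gdist V E a b + 1"
proof -
  obtain ws where ws: "is_walk V E ws" "hd ws = a" "last ws = b"
    using graph assms unfolding fin_conn_graph_def by blast
  then have "ws \<noteq> []" by (simp add: is_walk_def)
  then have "\<exists>n ws. is_walk V E ws \<and> hd ws = a \<and> last ws = b \<and> length ws = n + 1"
    using ws by (intro exI[of _ "length ws - 1"]) auto
  from LeastI_ex[OF this] that show ?thesis unfolding gdist_def by blast
qed

lemma gdist_triangle:
  assumes "a \<in> V" "b \<in> V" "c \<in> V"
  shows "gdist V E a c \<le> gdist V E a b + gdist V E b c"
proof -
  obtain xs where xs: "is_walk V E xs" "hd xs = a" "last xs = b" "length xs = gdist V E a b + 1"
    using geodesic_exists[OF assms(1,2)] by blast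
  obtain ys where ys: "is_walk V E ys" "hd ys = b" "last ys = c" "length ys = gdist V E b c + 1"
    using geodesic_exists[OF assms(2,3)] by blast
  have "gdist V E a c \<le> length (xs @ tl ys) - 1"
    using is_walk_glue[of V E xs ys] xs ys by (intro gdist_le_walk) auto
  then show ?thesis using xs ys by simp
qed

lemma gdist_commute:
  assumes "a \<in> V" "b \<in> V"
  shows "gdist V E a b = gdist V E b a"
proof -
  have "gdist V E b a \<le> gdist V E a b" if ab: "a \<in> V" "b \<in> V" for a b
  proof -
    obtain ws where ws: "is_walk V E ws" "hd ws = a" "last ws = b" "length ws = gdist V E a b + 1"
      by (rule geodesic_exists[OF ab])
    have "is_walk V E (rev ws)" using ws(1) edge_sym unfolding is_walk_iff_successively
      by (auto elim!: successively_mono)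
    moreover have "hd (rev ws) = b" "last (rev ws) = a" using ws
      by (auto simp: is_walk_def hd_rev last_rev)
    ultimately have "gdist V E b a \<le> length (rev ws) - 1" by (rule gdist_le_walk)
    then show ?thesis using ws(4) by simp
  qed
  then show ?thesis using assms by (meson antisym)
qed

lemma gdist_edge:
  assumes "E a b"
  shows "gdist V E a b = 1"
proof -
  have ab: "a \<in> V" "b \<in> V" "a \<noteq> b" using assms edge_vertices edge_irrefl by auto
  have "is_walk V E [a, b]" using ab assms by (simp add: is_walk_iff_successively)
  then have "gdist V E a b \<le> 1" using gdist_le_walk[of V E "[a, b]" a b] by simp
  moreover have "gdist V E a b \<noteq> 0"
  proof
    assume "gdist V E a b = 0"
    moreover obtain ws where "hd ws = a" "last ws = b" "length ws = gdist V E a b + 1"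
      using geodesic_exists[OF ab(1,2)] by blast
    ultimately show False using ab(3) by (cases ws) auto
  qed
  ultimately show ?thesis by simp
qed

lemma gdist_edge_lipschitz:
  assumes "E u v" "r \<in> V"
  shows "gdist V E u r \<le> gdist V E v r + 1"
  using gdist_triangle[of u v r] gdist_edge[OF assms(1)] edge_vertices[OF assms(1)] assms(2) by simp

lemma gromov_edge:
  "E u v \<Longrightarrow> gromov V E r u v = (real (gdist V E u r) + real (gdist V E v r) - 1) / 2"
  unfolding gromov_def by (simp add: gdist_edge)

lemma gromov_le_on_geodesic:
  assumes r: "r \<in> V"
    and ws: "is_walk V E ws" "hd ws = a" "last ws = b" "length ws = gdist V E a b + 1"
    and i: "Suc i < length ws"
  shows "gromov V E r a b \<le> gromov V E r (ws ! i) (ws ! Suc i)"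
proof -
  have ne: "ws \<noteq> []" and sV: "set ws \<subseteq> V" using ws by (auto simp: is_walk_def)
  have V: "ws ! i \<in> V" "ws ! Suc i \<in> V" "a \<in> V" "b \<in> V" using sV i ne ws by auto
  have "gdist V E a (ws ! i) \<le> length (take (Suc i) ws) - 1"
    by (rule gdist_le_walk[OF is_walk_take_drop(1)[OF ws(1)]])
      (use ws i ne in \<open>auto simp: last_conv_nth\<close>)
  then have to_i: "gdist V E a (ws ! i) \<le> i" using i by simp
  have "gdist V E (ws ! Suc i) b \<le> length (drop (Suc i) ws) - 1"
    by (rule gdist_le_walk[OF is_walk_take_drop(2)[OF ws(1)]])
      (use ws i ne in \<open>auto simp: hd_drop_conv_nth\<close>)
  then have from_Suc_i: "gdist V E b (ws ! Suc i) + Suc i \<le> gdist V E a b"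
    using i ws(4) gdist_commute[OF V(2) V(4)] by simp
  have "gdist V E a r \<le> gdist V E a (ws ! i) + gdist V E (ws ! i) r"
    "gdist V E b r \<le> gdist V E b (ws ! Suc i) + gdist V E (ws ! Suc i) r"
    using gdist_triangle V r by auto
  moreover have "gdist V E (ws ! i) (ws ! Suc i) = 1"
    by (rule gdist_edge[OF is_walk_edge[OF ws(1) i]])
  ultimately have "real (gdist V E a r) + real (gdist V E b r) - real (gdist V E a b)
      \<le> real (gdist V E (ws ! i) r) + real (gdist V E (ws ! Suc i) r) - real (gdist V E (ws ! i) (ws ! Suc i))"
    using to_i from_Suc_i by linarith
  then show ?thesis unfolding gromov_def by (rule divide_right_mono) simp
qed

lemma walk_with_large_gromov:
  assumes "r \<in> V" "ws \<noteq> []" "set ws \<subseteq> V" "successively (\<lambda>a b. t \<le> gromov V E r a b) ws"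
  obtains zs where "is_walk V E zs" "hd zs = hd ws" "last zs = last ws"
    "successively (\<lambda>a b. t \<le> gromov V E r a b) zs"
proof -
  have "\<exists>zs. zs \<noteq> [] \<and> set zs \<subseteq> V \<and> successively (\<lambda>a b. E a b \<and> t \<le> gromov V E r a b) zs
      \<and> hd zs = a \<and> last zs = b" if ab: "a \<in> V" "b \<in> V" "t \<le> gromov V E r a b" for a b
  proof -
    obtain zs where zs: "is_walk V E zs" "hd zs = a" "last zs = b" "length zs = gdist V E a b + 1"
      by (rule geodesic_exists[OF ab(1,2)])
    have "successively (\<lambda>a b. E a b \<and> t \<le> gromov V E r a b) zs"
      unfolding successively_conv_nth
    proof (intro allI impI conjI)
      fix i assume i: "Suc i < length zs"
      show "E (zs ! i) (zs ! Suc i)" by (rule is_walk_edge[OF zs(1) i])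
      show "t \<le> gromov V E r (zs ! i) (zs ! Suc i)"
        using ab(3) gromov_le_on_geodesic[OF assms(1) zs i] by (rule order_trans)
    qed
    then show ?thesis using zs by (auto simp: is_walk_def)
  qed
  from successively_refine[OF this assms(2-4)] obtain zs where zs: "zs \<noteq> []" "set zs \<subseteq> V"
      "successively (\<lambda>a b. E a b \<and> t \<le> gromov V E r a b) zs" "hd zs = hd ws" "last zs = last ws"
    by blast
  have "successively E zs" "successively (\<lambda>a b. t \<le> gromov V E r a b) zs"
    by (rule successively_mono[OF zs(3)]; simp)+
  with zs that show ?thesis by (simp add: is_walk_iff_successively)
qed

lemma optimal_walk_exists:
  assumes "r \<in> V" "x \<in> V" "y \<in> V" "x \<noteq> y"
  shows "\<exists>ws. vseq V x y ws \<and> is_walk V E ws \<and> seqval V E r ws = fmax V E r x y"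
proof -
  let ?t = "fmax V E r x y"
  obtain ws where ws: "vseq V x y ws" "seqval V E r ws = ?t"
    using fmax_attained_and_maximal(1)[OF finite_vertices assms(2,3)] by blast
  then have n: "2 \<le> length ws" "set ws \<subseteq> V" "hd ws = x" "last ws = y"
    by (auto simp: vseq_def)
  then have "ws \<noteq> []" by auto
  moreover have "successively (\<lambda>a b. ?t \<le> gromov V E r a b) ws"
    unfolding seqval_ge_iff[OF n(1), symmetric] ws(2) ..
  ultimately obtain zs where zs: "is_walk V E zs" "hd zs = hd ws" "last zs = last ws"
      "successively (\<lambda>a b. ?t \<le> gromov V E r a b) zs"
    by (rule walk_with_large_gromov[OF assms(1) _ n(2)])
  have "2 \<le> length zs"
  proof (cases zs)
    case Nil
    then show ?thesis using zs(1) by (simp add: is_walk_def)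
  next
    case (Cons z zs')
    then show ?thesis using zs(2,3) n(3,4) assms(4) by (cases zs') auto
  qed
  then have "vseq V x y zs" and "?t \<le> seqval V E r zs"
    using zs n seqval_ge_iff[of zs ?t] by (auto simp: vseq_def is_walk_def)
  moreover have "seqval V E r zs \<le> ?t"
    using fmax_attained_and_maximal(2)[OF finite_vertices assms(2,3) \<open>vseq V x y zs\<close>] .
  ultimately show ?thesis using zs(1) by (intro exI[of _ zs]) simp
qed

text \<open>With L i the distance from the i-th vertex to r, an edge contributes (L i + L (i+1) - 1)/2.
If no edge joins two vertices at the minimal distance \<alpha>, every edge has L i + L (i+1) \<ge> 2\<alpha> + 1,
with equality at an edge incident to a vertex at distance \<alpha>.\<close>

lemma seqval_walk:
  assumes r: "r \<in> V" and ws: "is_walk V E ws" "2 \<le> length ws"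
  shows "seqval V E r ws = (let \<alpha> = Min ((\<lambda>w. gdist V E w r) ` set ws) in
              (if \<exists>i < length ws - 1. gdist V E (ws ! i) r = \<alpha> \<and> gdist V E (ws ! Suc i) r = \<alpha>
               then real \<alpha> - 1/2 else real \<alpha>))"
proof -
  define L where "L i = gdist V E (ws ! i) r" for i
  define \<alpha> where "\<alpha> = Min ((\<lambda>w. gdist V E w r) ` set ws)"
  have edge: "gromov V E r (ws ! i) (ws ! Suc i) = (real (L i) + real (L (Suc i)) - 1) / 2"
    and lip: "L i \<le> L (Suc i) + 1" "L (Suc i) \<le> L i + 1" if "Suc i < length ws" for i
  proof -
    have "E (ws ! i) (ws ! Suc i)" by (rule is_walk_edge[OF ws(1) that])
    then show "gromov V E r (ws ! i) (ws ! Suc i) = (real (L i) + real (L (Suc i)) - 1) / 2"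
      and "L i \<le> L (Suc i) + 1" "L (Suc i) \<le> L i + 1"
      unfolding L_def using gromov_edge gdist_edge_lipschitz[OF _ r] edge_sym by simp_all
  qed
  have \<alpha>_le: "\<alpha> \<le> L i" if "i < length ws" for i
    unfolding \<alpha>_def L_def using that by (intro Min_le) auto
  have "\<alpha> \<in> (\<lambda>w. gdist V E w r) ` set ws"
    unfolding \<alpha>_def using ws(2) by (intro Min_in) auto
  then obtain j where j: "j < length ws" "L j = \<alpha>"
    unfolding L_def by (auto simp: in_set_conv_nth)
  show ?thesis
  proof (cases "\<exists>i < length ws - 1. L i = \<alpha> \<and> L (Suc i) = \<alpha>")
    case True
    then obtain i where i: "Suc i < length ws" "L i = \<alpha>" "L (Suc i) = \<alpha>"
      by (auto simp: less_diff_conv)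
    have "seqval V E r ws \<le> real \<alpha> - 1/2" using seqval_le[OF i(1), of V E r] edge[OF i(1)] i by simp
    moreover have "real \<alpha> - 1/2 \<le> seqval V E r ws"
      unfolding seqval_ge_iff[OF ws(2)] successively_conv_nth
    proof (intro allI impI)
      fix k assume k: "Suc k < length ws"
      have "2 * real \<alpha> \<le> real (L k) + real (L (Suc k))" using \<alpha>_le[of k] \<alpha>_le[of "Suc k"] k by simp
      then show "real \<alpha> - 1/2 \<le> gromov V E r (ws ! k) (ws ! Suc k)" using edge[OF k] by simp
    qed
    ultimately show ?thesis using True unfolding \<alpha>_def L_def Let_def by simp
  next
    case False
    have above: "2 * \<alpha> + 1 \<le> L k + L (Suc k)" if k: "Suc k < length ws" for k
    proof -
      have "\<not> (L k = \<alpha> \<and> L (Suc k) = \<alpha>)" using False k by auto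
      then show ?thesis using \<alpha>_le[of k] \<alpha>_le[of "Suc k"] k by linarith
    qed
    obtain i where i: "Suc i < length ws" "L i + L (Suc i) \<le> 2 * \<alpha> + 1"
    proof (cases "Suc j < length ws")
      case True
      then show ?thesis using that lip(2)[OF True] j(2) by simp
    next
      case False
      then have "j = Suc (j - 1)" using j(1) ws(2) by simp
      then show ?thesis using that[of "j - 1"] lip(1)[of "j - 1"] j by simp
    qed
    then have "seqval V E r ws \<le> real \<alpha>" using seqval_le[OF i(1), of V E r] edge[OF i(1)]
      by (simp add: of_nat_add[symmetric] del: of_nat_add)
    moreover have "real \<alpha> \<le> seqval V E r ws"
      unfolding seqval_ge_iff[OF ws(2)] successively_conv_nth
    proof (intro allI impI)
      fix k assume k: "Suc k < length ws"
      have "2 * real \<alpha> + 1 \<le> real (L k) + real (L (Suc k))" using above[OF k] by linarith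
      then show "real \<alpha> \<le> gromov V E r (ws ! k) (ws ! Suc k)" using edge[OF k] by simp
    qed
    ultimately show ?thesis using False unfolding \<alpha>_def L_def Let_def by simp
  qed
qed

end

theorem mainTheorem1:
  fixes V :: "'a set" and E :: "'a \<Rightarrow> 'a \<Rightarrow> bool" and r x y :: 'a
  assumes "fin_conn_graph V E" and "r \<in> V"
    and "x \<in> V" and "y \<in> V" and "x \<noteq> y"
  shows "(\<exists>ws. vseq V x y ws \<and> is_walk V E ws \<and> seqval V E r ws = fmax V E r x y)
    \<and> (\<forall>ws. vseq V x y ws \<and> is_walk V E ws \<and> seqval V E r ws = fmax V E r x y \<longrightarrow>
          (let \<alpha> = Min ((\<lambda>w. gdist V E w r) ` set ws) in
            fmax V E r x y =
              (if \<exists>i < length ws - 1. gdist V E (ws ! i) r = \<alpha> \<and> gdist V E (ws ! Suc i) r = \<alpha>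
               then real \<alpha> - 1/2 else real \<alpha>)))"
proof (intro conjI allI impI)
  interpret connected_graph V E by standard (rule assms(1))
  show "\<exists>ws. vseq V x y ws \<and> is_walk V E ws \<and> seqval V E r ws = fmax V E r x y"
    by (rule optimal_walk_exists[OF assms(2-5)])
  fix ws assume "vseq V x y ws \<and> is_walk V E ws \<and> seqval V E r ws = fmax V E r x y"
  then have "is_walk V E ws" "2 \<le> length ws" "seqval V E r ws = fmax V E r x y"
    by (simp_all add: vseq_def)
  from seqval_walk[OF assms(2) this(1,2)] this(3) show "let \<alpha> = Min ((\<lambda>w. gdist V E w r) ` set ws) in
      fmax V E r x y =
        (if \<exists>i < length ws - 1. gdist V E (ws ! i) r = \<alpha> \<and> gdist V E (ws ! Suc i) r = \<alpha>
         then real \<alpha> - 1/2 else real \<alpha>)" by (simp only: Let_def)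
qed

end
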